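(* Let $\mathbb{F}$ be an algebraically closed field of characteristic $0$, $D$ an $\mathbb{F}$-vector space with $\dim D=3$, and $\Gamma\subseteq D^{\ast}$ an additive subgroup with $\Gamma\simeq\mathbb{Z}^3$ and $\bigcap_{\alpha\in\Gamma}\ker\alpha=\{0\}$. Let $M=\bigoplus_{\theta\in\Gamma}M_\theta$ be a $\Gamma$-graded $\mathcal{S}(\Gamma,D)$-module with $\dim M_\theta=1$ for each $\theta$, and write $M_\theta=\mathbb{F}w_\theta$. Fix $0\neq\sigma\in\Gamma$, nonzero $\partial,\partial'\in\ker\sigma$ and $\nu\in\Gamma$, and define scalars $c_i$ ($i\in\mathbb{Z}$) by $x^{-\sigma}\partial'.x^{\sigma}\partial.w_{\nu+i\sigma}=c_iw_{\nu+i\sigma}$. Then $c_i=c$ is independent of $i$. Moreover, if $c\neq0$, then for each $a\in\{\sqrt c,-\sqrt c\}$ there exist nonzero $v_{\nu+i\sigma}\in M_{\nu+i\sigma}$ ($i\in\mathbb{Z}$) such that $x^{\sigma}\partial.v_{\nu+(i-1)\sigma}=a\,v_{\nu+i\sigma}$ and $x^{-\sigma}\partial'.v_{\nu+i\sigma}=a\,v_{\nu+(i-1)\sigma}$ for all $i\in\mathbb{Z}$.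
   Context: $\mathcal{S}(\Gamma,D)$ is the Lie algebra spanned by symbols $x^\alpha\partial$ with $\alpha\in\Gamma\setminus\{0\}$, $\partial\in\ker\alpha$ (linear in $\partial$), with bracket $[x^\alpha\partial_1,x^\beta\partial_2]=x^{\alpha+\beta}(\beta(\partial_1)\partial_2-\alpha(\partial_2)\partial_1)$ (the subalgebra of the generalized Witt algebra $\mathbb{F}[\Gamma]\otimes D$). A $\Gamma$-graded module satisfies $x^\alpha\partial.M_\theta\subseteq M_{\alpha+\theta}$. *)

theory Defs
  imports Main "HOL-Computational_Algebra.Polynomial"
begin

definition alg_closed :: "'a::field itself \<Rightarrow> bool" where
  "alg_closed _ \<longleftrightarrow> (\<forall>p::'a poly. degree p > 0 \<longrightarrow> (\<exists>x. poly p x = 0))"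

definition fadd :: "('d \<Rightarrow> 'a::field) \<Rightarrow> ('d \<Rightarrow> 'a) \<Rightarrow> ('d \<Rightarrow> 'a)" where
  "fadd \<alpha> \<beta> = (\<lambda>d. \<alpha> d + \<beta> d)"

definition fneg :: "('d \<Rightarrow> 'a::field) \<Rightarrow> ('d \<Rightarrow> 'a)" where
  "fneg \<alpha> = (\<lambda>d. - \<alpha> d)"

definition fzero :: "'d \<Rightarrow> 'a::field" where
  "fzero = (\<lambda>d. 0)"

definition fmul_int :: "int \<Rightarrow> ('d \<Rightarrow> 'a::field) \<Rightarrow> ('d \<Rightarrow> 'a)" where
  "fmul_int n \<alpha> = (\<lambda>d. of_int n * \<alpha> d)"

definition subgroup_Z3 :: "('d \<Rightarrow> 'a::field) set \<Rightarrow> bool" where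
  "subgroup_Z3 \<Gamma> \<longleftrightarrow>
     fzero \<in> \<Gamma> \<and> (\<forall>\<alpha>\<in>\<Gamma>. \<forall>\<beta>\<in>\<Gamma>. fadd \<alpha> \<beta> \<in> \<Gamma>) \<and> (\<forall>\<alpha>\<in>\<Gamma>. fneg \<alpha> \<in> \<Gamma>) \<and>
     (\<exists>f :: int \<Rightarrow> int \<Rightarrow> int \<Rightarrow> ('d \<Rightarrow> 'a).
        (\<forall>a b c a' b' c'. f (a + a') (b + b') (c + c') = fadd (f a b c) (f a' b' c')) \<and>
        inj (\<lambda>(a, b, c). f a b c) \<and> range (\<lambda>(a, b, c). f a b c) = \<Gamma>)"

definition graded_direct_sum ::
  "('d \<Rightarrow> 'a::field) set \<Rightarrow> (('d \<Rightarrow> 'a) \<Rightarrow> 'm::ab_group_add set) \<Rightarrow> bool" where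
  "graded_direct_sum \<Gamma> Mg \<longleftrightarrow>
     (\<forall>m::'m. \<exists>!f. (\<forall>\<theta>. \<theta> \<notin> \<Gamma> \<longrightarrow> f \<theta> = 0) \<and> finite {\<theta>. f \<theta> \<noteq> 0} \<and>
        (\<forall>\<theta>\<in>\<Gamma>. f \<theta> \<in> Mg \<theta>) \<and> m = (\<Sum>\<theta>\<in>{\<theta>. f \<theta> \<noteq> 0}. f \<theta>))"

(* act \<alpha> e is the action of x^\<alpha>e; M is a \<Gamma>-graded S(\<Gamma>,D)-module *)
definition graded_S_module ::
  "('a::field \<Rightarrow> 'd::ab_group_add \<Rightarrow> 'd) \<Rightarrow> ('d \<Rightarrow> 'a) set \<Rightarrow>
   ('a \<Rightarrow> 'm::ab_group_add \<Rightarrow> 'm) \<Rightarrow> (('d \<Rightarrow> 'a) \<Rightarrow> 'm set) \<Rightarrow>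
   (('d \<Rightarrow> 'a) \<Rightarrow> 'd \<Rightarrow> 'm \<Rightarrow> 'm) \<Rightarrow> bool" where
  "graded_S_module scaleD \<Gamma> scaleM Mg act \<longleftrightarrow>
     vector_space scaleM \<and>
     (\<comment> \<open>linear action of each x^\<alpha>e\<close>
      \<forall>\<alpha>\<in>\<Gamma>. \<forall>e. \<alpha> \<noteq> fzero \<longrightarrow> \<alpha> e = 0 \<longrightarrow> Vector_Spaces.linear scaleM scaleM (act \<alpha> e)) \<and>
     (
      \<forall>\<alpha>\<in>\<Gamma>. \<forall>e1 e2 c m. \<alpha> \<noteq> fzero \<longrightarrow> \<alpha> e1 = 0 \<longrightarrow> \<alpha> e2 = 0 \<longrightarrow>
         act \<alpha> (scaleD c e1 + e2) m = scaleM c (act \<alpha> e1 m) + act \<alpha> e2 m) \<and>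
     (\<comment> \<open>bracket relation [x^\<alpha>e1, x^\<beta>e2] = x^(\<alpha>+\<beta>)(\<beta>(e1)e2 - \<alpha>(e2)e1); it is 0 when \<alpha>+\<beta>=0\<close>
      \<forall>\<alpha>\<in>\<Gamma>. \<forall>\<beta>\<in>\<Gamma>. \<forall>e1 e2 m. \<alpha> \<noteq> fzero \<longrightarrow> \<beta> \<noteq> fzero \<longrightarrow> \<alpha> e1 = 0 \<longrightarrow> \<beta> e2 = 0 \<longrightarrow>
         act \<alpha> e1 (act \<beta> e2 m) - act \<beta> e2 (act \<alpha> e1 m) =
           (if fadd \<alpha> \<beta> = fzero then 0
            else act (fadd \<alpha> \<beta>) (scaleD (\<beta> e1) e2 - scaleD (\<alpha> e2) e1) m)) \<and>
     (
      \<forall>\<alpha>\<in>\<Gamma>. \<forall>\<theta>\<in>\<Gamma>. \<forall>e m. \<alpha> \<noteq> fzero \<longrightarrow> \<alpha> e = 0 \<longrightarrow> m \<in> Mg \<theta> \<longrightarrow>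
         act \<alpha> e m \<in> Mg (fadd \<alpha> \<theta>)) \<and>
     (\<forall>\<theta>\<in>\<Gamma>. module.subspace scaleM (Mg \<theta>)) \<and>
     graded_direct_sum \<Gamma> Mg"

end

theory Submission
  imports Defs
begin

text \<open>
  Write \<open>X\<close> for the action of \<open>x\<^sup>\<sigma>\<partial>\<close> and \<open>Y\<close> for that of \<open>x\<^sup>-\<^sup>\<sigma>\<partial>'\<close>. Their degrees
  cancel, so by the bracket relation \<open>X\<close> and \<open>Y\<close> commute. The pieces \<open>M\<^sub>i = M\<^sub>\<nu>\<^sub>+\<^sub>i\<^sub>\<sigma>\<close>
  are lines, \<open>X\<close> maps \<open>M\<^sub>i\<close> to \<open>M\<^sub>i\<^sub>+\<^sub>1\<close> and \<open>Y\<close> maps back. If \<open>X b = x b'\<close> and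
  \<open>Y b' = y b\<close> for generators \<open>b\<close> of \<open>M\<^sub>i\<close> and \<open>b'\<close> of \<open>M\<^sub>i\<^sub>+\<^sub>1\<close>, then \<open>YX\<close> acts by
  \<open>xy\<close> on \<open>M\<^sub>i\<close>, and \<open>YX = XY\<close> acts by \<open>xy\<close> on \<open>M\<^sub>i\<^sub>+\<^sub>1\<close>; hence \<open>c\<^sub>i = c\<^sub>i\<^sub>+\<^sub>1\<close>.
  If \<open>c = a\<^sup>2 \<noteq> 0\<close>, then \<open>X/a\<close> and \<open>Y/a\<close> are mutually inverse between neighbouring
  pieces, and the orbit of a nonzero vector of \<open>M\<^sub>\<nu>\<close> under them is the required family.

  The square root \<open>a\<close> is given.
\<close>

lemma int_chain_orbit:
  fixes A :: "int \<Rightarrow> 'a set"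
  assumes "b \<in> A 0"
    and f_into: "\<And>i u. u \<in> A i \<Longrightarrow> f u \<in> A (i + 1)"
    and g_into: "\<And>i u. u \<in> A (i + 1) \<Longrightarrow> g u \<in> A i"
    and f_g: "\<And>i u. u \<in> A (i + 1) \<Longrightarrow> f (g u) = u"
  shows "\<exists>v. \<forall>i. v i \<in> A i \<and> f (v (i - 1)) = v i"
proof -
  define v where "v i = (if 0 \<le> i then (f ^^ nat i) b else (g ^^ nat (- i)) b)" for i
  have v_up: "v i = f (v (i - 1))" if "1 \<le> i" for i
  proof -
    have "nat i = Suc (nat (i - 1))" using that by simp
    then show ?thesis using that unfolding v_def by simp
  qed
  have v_down: "v (i - 1) = g (v i)" if "i \<le> 0" for i
  proof -
    have "nat (- (i - 1)) = Suc (nat (- i))" using that by simp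
    then show ?thesis using that unfolding v_def by auto
  qed
  have v_in: "v i \<in> A i" for i
  proof (induction i rule: int_induct[where k = 0])
    case base
    then show ?case using \<open>b \<in> A 0\<close> by (simp add: v_def)
  next
    case (step1 i)
    then show ?case using v_up[of "i + 1"] f_into by simp
  next
    case (step2 i)
    then show ?case using v_down[of i] g_into[of "v i" "i - 1"] by simp
  qed
  have "f (v (i - 1)) = v i" for i
  proof (cases "1 \<le> i")
    case True
    then show ?thesis by (simp add: v_up)
  next
    case False
    then show ?thesis using v_down[of i] f_g[of "v i" "i - 1"] v_in[of i] by simp
  qed
  with v_in show ?thesis by blast
qed

lemma (in vector_space) dim_1_subspace_eq_line:
  assumes "subspace S" "dim S = 1"
  obtains b where "b \<noteq> 0" "S = range (\<lambda>t. t *s b)"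
proof -
  obtain B where B: "B \<subseteq> S" "independent B" "S \<subseteq> span B" "card B = dim S"
    by (rule basis_exists)
  then obtain b where "B = {b}" using assms(2) by (metis card_1_singletonE)
  with B assms(1) have "b \<noteq> 0" "S = span {b}"
    using dependent_zero span_subspace[of "{b}" S] by auto
  then show ?thesis using that span_singleton by simp
qed

locale commuting_ladder = vector_space scale
  for scale :: "'a::field \<Rightarrow> 'm::ab_group_add \<Rightarrow> 'm" (infixr \<open>*s\<close> 75) +
  fixes G :: "int \<Rightarrow> 'm set" and X Y :: "'m \<Rightarrow> 'm"
  assumes subspace_G: "subspace (G i)"
    and dim_G: "dim (G i) = 1"
    and linear_X: "Vector_Spaces.linear scale scale X"
    and linear_Y: "Vector_Spaces.linear scale scale Y"
    and X_Y_commute: "X (Y m) = Y (X m)"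
    and X_into: "u \<in> G i \<Longrightarrow> X u \<in> G (i + 1)"
    and Y_into: "u \<in> G (i + 1) \<Longrightarrow> Y u \<in> G i"
begin

sublocale X: Vector_Spaces.linear scale scale X by (rule linear_X)
sublocale Y: Vector_Spaces.linear scale scale Y by (rule linear_Y)

lemma YX_scalar_on_line_iff:
  assumes "G i = range (\<lambda>t. t *s b)" "b \<noteq> 0" "Y (X b) = k *s b"
  shows "(\<forall>w\<in>G i. Y (X w) = c *s w) \<longleftrightarrow> k = c"
proof
  assume "\<forall>w\<in>G i. Y (X w) = c *s w"
  moreover have "b \<in> G i" using assms(1) by (metis rangeI scale_one)
  ultimately have "k *s b = c *s b" using assms(3) by auto
  then show "k = c" using \<open>b \<noteq> 0\<close> by simp
qed (use assms in \<open>auto simp: X.scale Y.scale mult.commute\<close>)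

lemma G_eq_line:
  obtains b where "b \<noteq> 0" "b \<in> G i" "G i = range (\<lambda>t. t *s b)"
  by (metis dim_1_subspace_eq_line[OF subspace_G dim_G] rangeI scale_one)

lemma YX_scalar_step:
  "(\<forall>w\<in>G i. Y (X w) = c *s w) \<longleftrightarrow> (\<forall>w\<in>G (i + 1). Y (X w) = c *s w)"
proof -
  obtain b where b: "b \<noteq> 0" "b \<in> G i" "G i = range (\<lambda>t. t *s b)"
    by (rule G_eq_line)
  obtain b' where b': "b' \<noteq> 0" "b' \<in> G (i + 1)" "G (i + 1) = range (\<lambda>t. t *s b')"
    by (rule G_eq_line)
  obtain x where x: "X b = x *s b'" using X_into[OF b(2)] b'(3) by blast
  obtain y where y: "Y b' = y *s b" using Y_into[OF b'(2)] b(3) by blast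
  have "Y (X b) = (x * y) *s b" by (simp add: x y Y.scale)
  moreover have "Y (X b') = (x * y) *s b'"
    by (simp add: X_Y_commute[symmetric] x y X.scale mult.commute)
  ultimately show ?thesis
    using YX_scalar_on_line_iff b b' by simp
qed

lemma YX_acts_by_scalar:
  obtains c where "\<And>i w. w \<in> G i \<Longrightarrow> Y (X w) = c *s w"
proof -
  obtain b where b: "b \<noteq> 0" "b \<in> G 0" "G 0 = range (\<lambda>t. t *s b)"
    by (rule G_eq_line)
  obtain c where "Y (X b) = c *s b"
    using Y_into[of "X b" 0] X_into[OF b(2)] b(3) by auto
  then have "\<forall>w\<in>G 0. Y (X w) = c *s w"
    using YX_scalar_on_line_iff b by blast
  then have "\<forall>w\<in>G i. Y (X w) = c *s w" for i
  proof (induction i rule: int_induct[where k = 0])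
    case (step1 i)
    then show ?case using YX_scalar_step[of i c] by blast
  next
    case (step2 i)
    then show ?case using YX_scalar_step[of "i - 1" c] by simp
  qed
  with that show thesis by blast
qed

lemma normalized_ladder_basis:
  assumes YX: "\<And>i w. w \<in> G i \<Longrightarrow> Y (X w) = (a * a) *s w" and "a \<noteq> 0"
  shows "\<exists>v. \<forall>i. v i \<in> G i \<and> v i \<noteq> 0 \<and> X (v (i - 1)) = a *s v i \<and> Y (v i) = a *s v (i - 1)"
proof -
  define f where "f u = inverse a *s X u" for u
  define g where "g u = inverse a *s Y u" for u
  have inv: "inverse a * inverse a * (a * a) = 1"
    using \<open>a \<noteq> 0\<close> by (simp add: field_simps)
  have g_f: "g (f u) = u" if "u \<in> G i" for u i
  proof -
    have "g (f u) = (inverse a * inverse a) *s Y (X u)"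
      by (simp add: f_def g_def Y.scale)
    also have "\<dots> = u"
      by (simp only: YX[OF that] scale_scale inv scale_one)
    finally show ?thesis .
  qed
  have f_g: "f (g u) = u" if "u \<in> G (i + 1)" for u i
  proof -
    have "f (g u) = (inverse a * inverse a) *s Y (X u)"
      by (simp add: f_def g_def X.scale X_Y_commute)
    also have "\<dots> = u"
      by (simp only: YX[OF that] scale_scale inv scale_one)
    finally show ?thesis .
  qed
  have f_into: "f u \<in> G (i + 1) - {0}" if "u \<in> G i - {0}" for u i
  proof
    show "f u \<in> G (i + 1)"
      using that X_into subspace_scale[OF subspace_G] by (simp add: f_def)
    show "f u \<notin> {0}"
      using that g_f[of u i] by (auto simp: g_def)
  qed
  have g_into: "g u \<in> G i - {0}" if "u \<in> G (i + 1) - {0}" for u i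
  proof
    show "g u \<in> G i"
      using that Y_into subspace_scale[OF subspace_G] by (simp add: g_def)
    show "g u \<notin> {0}"
      using that f_g[of u i] by (auto simp: f_def)
  qed
  obtain b where "b \<noteq> 0" "b \<in> G 0" by (rule G_eq_line)
  then have "\<exists>v. \<forall>i. v i \<in> G i - {0} \<and> f (v (i - 1)) = v i"
    by (intro int_chain_orbit[where g = g] f_into g_into f_g[OF DiffD1]) simp
  then obtain v where v: "\<And>i. v i \<in> G i - {0}" "\<And>i. f (v (i - 1)) = v i"
    by blast
  have "X (v (i - 1)) = a *s v i" for i
    using v(2)[of i, symmetric] \<open>a \<noteq> 0\<close> by (simp add: f_def)
  moreover have "Y (v i) = a *s v (i - 1)" for i
    using g_f[of "v (i - 1)" "i - 1", symmetric] v \<open>a \<noteq> 0\<close> by (simp add: g_def)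
  ultimately show ?thesis using v(1) by blast
qed

end

lemma fneg_eq_fzero_iff: "fneg \<alpha> = fzero \<longleftrightarrow> \<alpha> = fzero"
  by (auto simp: fneg_def fzero_def fun_eq_iff)

lemma fadd_fneg_self: "fadd \<alpha> (fneg \<alpha>) = fzero"
  by (simp add: fadd_def fneg_def fzero_def)

lemma fadd_fmul_int_succ: "fadd \<sigma> (fadd \<nu> (fmul_int i \<sigma>)) = fadd \<nu> (fmul_int (i + 1) \<sigma>)"
  by (simp add: fadd_def fmul_int_def fun_eq_iff algebra_simps)

lemma fadd_fneg_fmul_int_succ:
  "fadd (fneg \<sigma>) (fadd \<nu> (fmul_int (i + 1) \<sigma>)) = fadd \<nu> (fmul_int i \<sigma>)"
  by (simp add: fadd_def fneg_def fmul_int_def fun_eq_iff algebra_simps)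

lemma subgroup_Z3_fadd: "subgroup_Z3 \<Gamma> \<Longrightarrow> \<alpha> \<in> \<Gamma> \<Longrightarrow> \<beta> \<in> \<Gamma> \<Longrightarrow> fadd \<alpha> \<beta> \<in> \<Gamma>"
  and subgroup_Z3_fneg: "subgroup_Z3 \<Gamma> \<Longrightarrow> \<alpha> \<in> \<Gamma> \<Longrightarrow> fneg \<alpha> \<in> \<Gamma>"
  by (simp_all add: subgroup_Z3_def)

lemma subgroup_Z3_fadd_fmul_int:
  assumes "subgroup_Z3 \<Gamma>" "\<sigma> \<in> \<Gamma>" "\<nu> \<in> \<Gamma>"
  shows "fadd \<nu> (fmul_int i \<sigma>) \<in> \<Gamma>"
proof (induction i rule: int_induct[where k = 0])
  case base
  have "fadd \<nu> (fmul_int 0 \<sigma>) = \<nu>"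
    by (simp add: fadd_def fmul_int_def)
  then show ?case using assms(3) by simp
next
  case (step1 i)
  then show ?case
    using subgroup_Z3_fadd[OF assms(1,2)] fadd_fmul_int_succ by metis
next
  case (step2 i)
  then show ?case
    using subgroup_Z3_fadd[OF assms(1) subgroup_Z3_fneg[OF assms(1,2)]]
      fadd_fneg_fmul_int_succ[of \<sigma> \<nu> "i - 1"] by (metis diff_add_cancel)
qed

lemma graded_S_module_opposite_commute:
  assumes M: "graded_S_module scaleD \<Gamma> scaleM Mg act"
    and "\<alpha> \<in> \<Gamma>" "\<beta> \<in> \<Gamma>" "\<alpha> \<noteq> fzero" "\<beta> \<noteq> fzero" "fadd \<alpha> \<beta> = fzero"
    and "\<alpha> e = 0" "\<beta> e' = 0"
  shows "act \<alpha> e (act \<beta> e' m) = act \<beta> e' (act \<alpha> e m)"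
proof -
  have "act \<alpha> e (act \<beta> e' m) - act \<beta> e' (act \<alpha> e m) = 0"
    using M assms unfolding graded_S_module_def by simp
  then show ?thesis by simp
qed

lemma graded_S_module_commuting_ladder:
  assumes M: "graded_S_module scaleD \<Gamma> scaleM Mg act" and \<Gamma>: "subgroup_Z3 \<Gamma>"
    and dim1: "\<forall>\<theta>\<in>\<Gamma>. vector_space.dim scaleM (Mg \<theta>) = 1"
    and \<sigma>: "\<sigma> \<in> \<Gamma>" "\<sigma> \<noteq> fzero" "\<sigma> e = 0" "\<sigma> e' = 0" and \<nu>: "\<nu> \<in> \<Gamma>"
  shows "commuting_ladder scaleM (\<lambda>i. Mg (fadd \<nu> (fmul_int i \<sigma>))) (act \<sigma> e) (act (fneg \<sigma>) e')"
proof -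
  have \<sigma>': "fneg \<sigma> \<in> \<Gamma>" "fneg \<sigma> \<noteq> fzero" "fneg \<sigma> e' = 0"
    using \<Gamma> \<sigma> subgroup_Z3_fneg fneg_eq_fzero_iff by (auto simp: fneg_def)
  note line_mem = subgroup_Z3_fadd_fmul_int[OF \<Gamma> \<sigma>(1) \<nu>]
  interpret vector_space scaleM
    using M by (simp add: graded_S_module_def)
  show ?thesis
  proof (intro commuting_ladder.intro commuting_ladder_axioms.intro vector_space_axioms)
    fix i :: int and m u
    show "subspace (Mg (fadd \<nu> (fmul_int i \<sigma>)))"
      using M line_mem by (simp add: graded_S_module_def)
    show "dim (Mg (fadd \<nu> (fmul_int i \<sigma>))) = 1"
      using dim1 line_mem by blast
    show "Vector_Spaces.linear scaleM scaleM (act \<sigma> e)"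
      "Vector_Spaces.linear scaleM scaleM (act (fneg \<sigma>) e')"
      using M \<sigma> \<sigma>' by (simp_all add: graded_S_module_def)
    show "act \<sigma> e (act (fneg \<sigma>) e' m) = act (fneg \<sigma>) e' (act \<sigma> e m)"
      using graded_S_module_opposite_commute[OF M \<sigma>(1) \<sigma>'(1) \<sigma>(2) \<sigma>'(2)
          fadd_fneg_self \<sigma>(3) \<sigma>'(3)] .
    show "act \<sigma> e u \<in> Mg (fadd \<nu> (fmul_int (i + 1) \<sigma>))"
      if "u \<in> Mg (fadd \<nu> (fmul_int i \<sigma>))"
      using M \<sigma> line_mem that fadd_fmul_int_succ unfolding graded_S_module_def by metis
    show "act (fneg \<sigma>) e' u \<in> Mg (fadd \<nu> (fmul_int i \<sigma>))"
      if "u \<in> Mg (fadd \<nu> (fmul_int (i + 1) \<sigma>))"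
      using M \<sigma>' line_mem that fadd_fneg_fmul_int_succ unfolding graded_S_module_def by metis
  qed
qed

theorem lemma3p1:
  fixes scaleD :: "'a::field_char_0 \<Rightarrow> 'd::ab_group_add \<Rightarrow> 'd"
    and scaleM :: "'a \<Rightarrow> 'm::ab_group_add \<Rightarrow> 'm"
    and \<Gamma> :: "('d \<Rightarrow> 'a) set"
    and Mg :: "('d \<Rightarrow> 'a) \<Rightarrow> 'm set"
    and act :: "('d \<Rightarrow> 'a) \<Rightarrow> 'd \<Rightarrow> 'm \<Rightarrow> 'm"
    and \<sigma> \<nu> :: "'d \<Rightarrow> 'a"
    and e e' :: 'd
  assumes F: "alg_closed TYPE('a)"
    and D: "vector_space scaleD" "vector_space.dim scaleD (UNIV :: 'd set) = 3"
    and Gamma_dual: "\<forall>\<alpha>\<in>\<Gamma>. Vector_Spaces.linear scaleD (*) \<alpha>"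
    and Gamma_Z3: "subgroup_Z3 \<Gamma>"
    and Gamma_ker: "\<forall>d. (\<forall>\<alpha>\<in>\<Gamma>. \<alpha> d = 0) \<longrightarrow> d = 0"
    and M: "graded_S_module scaleD \<Gamma> scaleM Mg act"
    and dim1: "\<forall>\<theta>\<in>\<Gamma>. vector_space.dim scaleM (Mg \<theta>) = 1"
    and sigma: "\<sigma> \<in> \<Gamma>" "\<sigma> \<noteq> fzero"
    and d: "e \<noteq> 0" "\<sigma> e = 0"
    and d': "e' \<noteq> 0" "\<sigma> e' = 0"
    and nu: "\<nu> \<in> \<Gamma>"
  shows "\<exists>c::'a.
    (\<forall>i::int. \<forall>w\<in>Mg (fadd \<nu> (fmul_int i \<sigma>)).
        act (fneg \<sigma>) e' (act \<sigma> e w) = scaleM c w) \<and>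
    (c \<noteq> 0 \<longrightarrow> (\<forall>a::'a. a * a = c \<longrightarrow>
       (\<exists>v :: int \<Rightarrow> 'm. \<forall>i::int.
          v i \<in> Mg (fadd \<nu> (fmul_int i \<sigma>)) \<and> v i \<noteq> 0 \<and>
          act \<sigma> e (v (i - 1)) = scaleM a (v i) \<and>
          act (fneg \<sigma>) e' (v i) = scaleM a (v (i - 1)))))"
proof -
  interpret ladder: commuting_ladder scaleM "\<lambda>i. Mg (fadd \<nu> (fmul_int i \<sigma>))"
    "act \<sigma> e" "act (fneg \<sigma>) e'"
    using graded_S_module_commuting_ladder[OF M Gamma_Z3 dim1 sigma d(2) d'(2) nu] .
  obtain c where c: "\<And>i w. w \<in> Mg (fadd \<nu> (fmul_int i \<sigma>)) \<Longrightarrow>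
      act (fneg \<sigma>) e' (act \<sigma> e w) = scaleM c w"
    using ladder.YX_acts_by_scalar by blast
  have "\<exists>v. \<forall>i. v i \<in> Mg (fadd \<nu> (fmul_int i \<sigma>)) \<and> v i \<noteq> 0 \<and>
      act \<sigma> e (v (i - 1)) = scaleM a (v i) \<and> act (fneg \<sigma>) e' (v i) = scaleM a (v (i - 1))"
    if "c \<noteq> 0" "a * a = c" for a
    using ladder.normalized_ladder_basis[of a] c that by auto
  with c show ?thesis by blast
qed

end
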